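(* Consider the game $\widehat{\mathcal{G}}_4$ described in the context. The strategy profile $\sigma^*$, in which all decoy voters apply for slot $s_2$ and all real voters apply for slot $s_1$, is a Nash equilibrium of $\widehat{\mathcal{G}}_4$.
   Context: There is a finite set $N$ of citizens partitioned into $\bar k>1$ districts $N_1,\dots,N_{\bar k}$; district $N_k$ contains $n_k^R\ge1$ real voters and $n_k^D$ decoy voters, $n_k^R+n_k^D>1$ (common knowledge; individual types private). Real voters value their ballot at $V>0$, decoy voters at $0$. Fix $1\le q\le\bar k-1$ and $\varepsilon>0$. Each citizen applies for slot $s_1$ or $s_2$. For district $k$ let $m_k$ be its number of $s_1$-applicants and $\rho_k=m_k/n_k^R$; let $\rho$ be the $q$-th smallest of $\rho_1,\dots,\rho_{\bar k}$, $C=\{k:\rho_k<\rho\}$, $T=\{k:\rho_k=\rho\}$, $c=|C|$, $t=|T|$; all districts in $C$ are selected and $q-c$ districts of $T$ are selected uniformly at random; the others are non-selected. Prices offered: $s_1$ in a selected district $V+\varepsilon$; $s_2$ in a selected district $2\varepsilon$; $s_1$ in a non-selected district $\varepsilon$; $s_2$ in a non-selected district $2\varepsilon$. Each applicant sells iff the price strictly exceeds his valuation, and the adversary must buy. Hence a decoy voter's payoff is the (expected) price offered to him, and a real voter's payoff is $V+\varepsilon$ if he applied for $s_1$ and his district is selected and $V$ otherwise. $\widehat{\mathcal{G}}_4$ is the simultaneous-move game in which each citizen chooses $s_1$ or $s_2$ with these expected payoffs. *)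

theory Defs
  imports Complex_Main
begin

datatype slot = S1 | S2

text \<open>Citizens are elements of a finite set N; d i is the district of citizen i
(districts are 1..kbar); R is the set of real voters (the others are decoys);
a strategy profile assigns a slot to each citizen.\<close>

definition n_real :: "'a set \<Rightarrow> ('a \<Rightarrow> nat) \<Rightarrow> 'a set \<Rightarrow> nat \<Rightarrow> nat" where
  "n_real N d R k = card {i\<in>N. d i = k \<and> i \<in> R}"

definition n_decoy :: "'a set \<Rightarrow> ('a \<Rightarrow> nat) \<Rightarrow> 'a set \<Rightarrow> nat \<Rightarrow> nat" where
  "n_decoy N d R k = card {i\<in>N. d i = k \<and> i \<notin> R}"

definition m_count :: "'a set \<Rightarrow> ('a \<Rightarrow> nat) \<Rightarrow> ('a \<Rightarrow> slot) \<Rightarrow> nat \<Rightarrow> nat" where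
  "m_count N d \<sigma> k = card {i\<in>N. d i = k \<and> \<sigma> i = S1}"

definition rho :: "'a set \<Rightarrow> ('a \<Rightarrow> nat) \<Rightarrow> 'a set \<Rightarrow> ('a \<Rightarrow> slot) \<Rightarrow> nat \<Rightarrow> real" where
  "rho N d R \<sigma> k = real (m_count N d \<sigma> k) / real (n_real N d R k)"

text \<open>The q-th smallest of rho_1, ..., rho_kbar (q is 1-based).\<close>
definition rho_q :: "nat \<Rightarrow> nat \<Rightarrow> 'a set \<Rightarrow> ('a \<Rightarrow> nat) \<Rightarrow> 'a set \<Rightarrow> ('a \<Rightarrow> slot) \<Rightarrow> real" where
  "rho_q kbar q N d R \<sigma> = sort (map (rho N d R \<sigma>) [1..<Suc kbar]) ! (q - 1)"

definition sel_prob :: "nat \<Rightarrow> nat \<Rightarrow> 'a set \<Rightarrow> ('a \<Rightarrow> nat) \<Rightarrow> 'a set \<Rightarrow> ('a \<Rightarrow> slot) \<Rightarrow> nat \<Rightarrow> real" where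
  "sel_prob kbar q N d R \<sigma> k =
     (let r = rho_q kbar q N d R \<sigma>;
          C = {j\<in>{1..kbar}. rho N d R \<sigma> j < r};
          T = {j\<in>{1..kbar}. rho N d R \<sigma> j = r}
      in if rho N d R \<sigma> k < r then 1
         else if rho N d R \<sigma> k = r then (real q - real (card C)) / real (card T)
         else 0)"

definition payoff :: "real \<Rightarrow> real \<Rightarrow> nat \<Rightarrow> nat \<Rightarrow> 'a set \<Rightarrow> ('a \<Rightarrow> nat) \<Rightarrow> 'a set
                       \<Rightarrow> ('a \<Rightarrow> slot) \<Rightarrow> 'a \<Rightarrow> real" where
  "payoff V \<epsilon> kbar q N d R \<sigma> i =
     (let p = sel_prob kbar q N d R \<sigma> (d i) in
      if i \<in> R then (if \<sigma> i = S1 then p * (V + \<epsilon>) + (1 - p) * V else V)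
      else (if \<sigma> i = S1 then p * (V + \<epsilon>) + (1 - p) * \<epsilon> else 2 * \<epsilon>))"

definition nash_eq :: "real \<Rightarrow> real \<Rightarrow> nat \<Rightarrow> nat \<Rightarrow> 'a set \<Rightarrow> ('a \<Rightarrow> nat) \<Rightarrow> 'a set
                       \<Rightarrow> ('a \<Rightarrow> slot) \<Rightarrow> bool" where
  "nash_eq V \<epsilon> kbar q N d R \<sigma> \<longleftrightarrow>
     (\<forall>i\<in>N. \<forall>a. payoff V \<epsilon> kbar q N d R (\<sigma>(i := a)) i \<le> payoff V \<epsilon> kbar q N d R \<sigma> i)"

end

theory Submission
  imports Defs "HOL-Library.Multiset"
begin

text \<open>Under the sincere profile every district has \<open>\<rho>\<^sub>k = 1\<close>, so no selection
probability is negative and a real voter loses nothing by applying for \<open>s\<^sub>1\<close>.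
A decoy who switches to \<open>s\<^sub>1\<close> raises the ratio of his own district to
\<open>(n + 1) / n > 1\<close> while all others stay at \<open>1\<close>; since \<open>q < kbar\<close>, the \<open>q\<close>-th smallest
ratio is still \<open>1\<close>, his district is surely not selected, and he earns \<open>\<epsilon> < 2\<epsilon>\<close>.\<close>

definition sincere_profile :: "'a set \<Rightarrow> 'a \<Rightarrow> slot" where
  "sincere_profile R = (\<lambda>i. if i \<in> R then S1 else S2)"

lemma m_count_sincere_profile: "m_count N d (sincere_profile R) k = n_real N d R k"
  unfolding m_count_def n_real_def sincere_profile_def by (rule arg_cong[where f = card]) auto

lemma m_count_switch_to_S1:
  assumes "finite N" "i \<in> N" "\<sigma> i = S2"
  shows "m_count N d (\<sigma>(i := S1)) k = m_count N d \<sigma> k + (if k = d i then 1 else 0)"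
proof (cases "k = d i")
  case True
  then have "{j\<in>N. d j = k \<and> (\<sigma>(i := S1)) j = S1} = insert i {j\<in>N. d j = k \<and> \<sigma> j = S1}"
    using assms by auto
  with True assms show ?thesis unfolding m_count_def by simp
next
  case False
  then have "{j\<in>N. d j = k \<and> (\<sigma>(i := S1)) j = S1} = {j\<in>N. d j = k \<and> \<sigma> j = S1}"
    by auto
  with False show ?thesis unfolding m_count_def by simp
qed

lemma sort_map_upt_single_exception:
  fixes f :: "nat \<Rightarrow> 'b::linorder"
  assumes f: "\<forall>j\<in>{a..<b}. f j = (if j = k then x else c)" and k: "k \<in> {a..<b}" and "c \<le> x"
  shows "sort (map f [a..<b]) = replicate (b - a - 1) c @ [x]"
proof (rule properties_for_sort)
  have "map f (remove1 k [a..<b]) = map (\<lambda>_. c) (remove1 k [a..<b])"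
    using f by (intro map_cong) auto
  then have rest: "map f (remove1 k [a..<b]) = replicate (b - a - 1) c"
    using k by (simp add: map_replicate_const length_remove1)
  have "mset (map f [a..<b]) = add_mset (f k) (mset (map f (remove1 k [a..<b])))"
    using k by (simp add: mset_map mset_remove1 image_mset_Diff)
  then show "mset (replicate (b - a - 1) c @ [x]) = mset (map f [a..<b])"
    using f k by (simp add: rest)
  show "sorted (replicate (b - a - 1) c @ [x])"
    using \<open>c \<le> x\<close> by (auto simp: sorted_append)
qed

lemma rho_q_single_exception:
  assumes "\<forall>j\<in>{1..kbar}. rho N d R \<sigma> j = (if j = k then x else c)"
    and "k \<in> {1..kbar}" "c \<le> x" "1 \<le> q" "q < kbar"
  shows "rho_q kbar q N d R \<sigma> = c"
proof -
  have "sort (map (rho N d R \<sigma>) [1..<Suc kbar]) = replicate (kbar - 1) c @ [x]"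
    using sort_map_upt_single_exception[of 1 "Suc kbar" "rho N d R \<sigma>" k x c] assms(1-3)
    by (simp del: upt_Suc add: atLeastLessThanSuc_atLeastAtMost)
  moreover have "q - 1 < kbar - 1"
    using assms(4,5) by linarith
  ultimately show ?thesis
    by (simp del: upt_Suc add: rho_q_def nth_append)
qed

lemma sel_prob_eq_0_if_above_rho_q:
  assumes "rho_q kbar q N d R \<sigma> < rho N d R \<sigma> k"
  shows "sel_prob kbar q N d R \<sigma> k = 0"
  using assms unfolding sel_prob_def Let_def by auto

lemma sel_prob_nonneg_if_rho_constant:
  assumes "\<forall>j\<in>{1..kbar}. rho N d R \<sigma> j = c" and "k \<in> {1..kbar}"
  shows "0 \<le> sel_prob kbar q N d R \<sigma> k"
proof (cases "c = rho_q kbar q N d R \<sigma>")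
  case True
  then have no_lower: "{j\<in>{1..kbar}. rho N d R \<sigma> j < rho_q kbar q N d R \<sigma>} = {}"
    using assms(1) by auto
  show ?thesis
    using True assms unfolding sel_prob_def Let_def no_lower by simp
next
  case False
  with assms show ?thesis unfolding sel_prob_def Let_def by auto
qed

lemma rho_sincere_profile:
  assumes "n_real N d R k \<ge> 1"
  shows "rho N d R (sincere_profile R) k = 1"
  using assms by (simp add: rho_def m_count_sincere_profile)

lemma real_voter_keeps_S1:
  assumes "\<forall>k\<in>{1..kbar}. n_real N d R k \<ge> 1" "d i \<in> {1..kbar}" "i \<in> R" "\<epsilon> > 0"
  shows "payoff V \<epsilon> kbar q N d R ((sincere_profile R)(i := a)) i
         \<le> payoff V \<epsilon> kbar q N d R (sincere_profile R) i"
proof -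
  let ?p = "sel_prob kbar q N d R (sincere_profile R) (d i)"
  have "0 \<le> ?p"
    using assms(1,2) by (intro sel_prob_nonneg_if_rho_constant[where c = 1]) (simp add: rho_sincere_profile)
  then have "V \<le> ?p * (V + \<epsilon>) + (1 - ?p) * V"
    using \<open>\<epsilon> > 0\<close> by (simp add: algebra_simps)
  moreover have "(sincere_profile R)(i := S1) = sincere_profile R"
    using \<open>i \<in> R\<close> by (auto simp: sincere_profile_def)
  ultimately show ?thesis
    using \<open>i \<in> R\<close> by (cases a) (simp_all add: payoff_def Let_def sincere_profile_def)
qed

lemma decoy_keeps_S2:
  assumes "finite N" "\<forall>k\<in>{1..kbar}. n_real N d R k \<ge> 1"
    and "i \<in> N" "d i \<in> {1..kbar}" "i \<notin> R"
    and "1 \<le> q" "q < kbar" "\<epsilon> > 0"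
  shows "payoff V \<epsilon> kbar q N d R ((sincere_profile R)(i := a)) i
         \<le> payoff V \<epsilon> kbar q N d R (sincere_profile R) i"
proof (cases a)
  case S1
  let ?\<sigma> = "(sincere_profile R)(i := S1)"
  define n where "n = n_real N d R (d i)"
  have "n \<ge> 1" using assms(2,4) n_def by auto
  have "sincere_profile R i = S2"
    using \<open>i \<notin> R\<close> by (simp add: sincere_profile_def)
  then have rho_dev: "\<forall>k\<in>{1..kbar}. rho N d R ?\<sigma> k = (if k = d i then (n + 1) / n else 1)"
    using assms(2) m_count_switch_to_S1[OF assms(1,3)]
    by (auto simp: rho_def n_def m_count_sincere_profile)
  have "(1::real) < (n + 1) / n" using \<open>n \<ge> 1\<close> by (simp add: field_simps)
  moreover have "rho_q kbar q N d R ?\<sigma> = 1"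
    using rho_dev assms(4,6,7) calculation by (intro rho_q_single_exception) auto
  ultimately have "sel_prob kbar q N d R ?\<sigma> (d i) = 0"
    using rho_dev assms(4) by (intro sel_prob_eq_0_if_above_rho_q) simp
  with S1 assms(5,8) show ?thesis
    by (simp add: payoff_def Let_def sincere_profile_def)
next
  case S2
  have "(sincere_profile R)(i := S2) = sincere_profile R"
    using \<open>i \<notin> R\<close> by (auto simp: sincere_profile_def)
  with S2 show ?thesis by simp
qed

theorem proposition2:
  fixes N :: "'a set" and R :: "'a set" and d :: "'a \<Rightarrow> nat"
    and kbar q :: nat and V \<epsilon> :: real
  assumes "finite N" and "R \<subseteq> N" and "kbar > 1"
    and "\<forall>i\<in>N. d i \<in> {1..kbar}"
    and "\<forall>k\<in>{1..kbar}. n_real N d R k \<ge> 1"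
    and "\<forall>k\<in>{1..kbar}. n_real N d R k + n_decoy N d R k > 1"
    and "1 \<le> q" and "q \<le> kbar - 1"
    and "V > 0" and "\<epsilon> > 0"
  shows "nash_eq V \<epsilon> kbar q N d R (\<lambda>i. if i \<in> R then S1 else S2)"
  unfolding nash_eq_def sincere_profile_def[symmetric]
proof (intro ballI allI)
  fix i a
  assume "i \<in> N"
  then have "d i \<in> {1..kbar}" using assms(4) by blast
  have "q < kbar" using assms(3,8) by linarith
  show "payoff V \<epsilon> kbar q N d R ((sincere_profile R)(i := a)) i
        \<le> payoff V \<epsilon> kbar q N d R (sincere_profile R) i"
  proof (cases "i \<in> R")
    case True
    show ?thesis by (rule real_voter_keeps_S1[OF assms(5) \<open>d i \<in> {1..kbar}\<close> True assms(10)])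
  next
    case False
    show ?thesis
      by (rule decoy_keeps_S2[OF assms(1,5) \<open>i \<in> N\<close> \<open>d i \<in> {1..kbar}\<close> False
            assms(7) \<open>q < kbar\<close> assms(10)])
  qed
qed

end
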